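(* Let $X$ be a real Banach space and $T:X\rightrightarrows X^*$ maximal monotone. The following are equivalent: 1. $R(T)$ is bounded; 2. for every $h\in\mathcal{F}_T$, $P_2(D(h))$ is bounded; 3. there exists $h\in\mathcal{F}_T$ with $P_2(D(h))$ bounded; 4. the functions $h(\cdot,x^* ):X\to\mathbb{R}\cup\{\pm\infty\}$, for $h\in\mathcal{F}_T$ and $x^*\in P_2D(h)$, are all real-valued and there is $0\leq L<\infty$ with $|h(x,x^* )-h(z,x^* )|\leq L\|x-z\|$ for all $x,z\in X$, $h\in\mathcal{F}_T$, $x^*\in P_2D(h)$; 5. there exists $h\in\mathcal{F}_T$ such that the functions $h(\cdot,x^* )$, $x^*\in P_2D(h)$, are all real-valued and there is $0\leq L<\infty$ with $|h(x,x^* )-h(z,x^* )|\leq L\|x-z\|$ for all $x,z\in X$, $x^*\in P_2D(h)$.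
   Context: An operator $T:X\rightrightarrows X^*$ is a subset of $X\times X^*$, with range $R(T)$ its projection onto $X^*$; $T$ is monotone if $\langle x-y,x^*-y^*\rangle\geq0$ for all $(x,x^* ),(y,y^* )\in T$, and maximal monotone if it is monotone and not properly contained in another monotone operator. $\mathcal{F}_T$ is the set of all convex lower semicontinuous $h:X\times X^*\to\mathbb{R}\cup\{\pm\infty\}$ with $h(x,x^* )\geq\langle x,x^*\rangle$ for all $(x,x^* )$ and equality on $T$. $P_1,P_2$ are the canonical projections of $X\times X^*$ onto $X$ and $X^*$; $D(h)=\{z\;|\;h(z)<\infty\}$. *)

theory Defs
  imports "HOL-Analysis.Analysis"
begin

(* X is a real Banach space ('a::banach), its dual X-dual is the space of bounded
linear functionals 'a =>L real with the operator norm. Operators T : X \<rightrightarrows> X-dual are subsets of X x X-dual.*)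

type_synonym 'a dualpair = "'a \<times> ('a \<Rightarrow>\<^sub>L real)"

definition pairing :: "'a::real_normed_vector \<Rightarrow> ('a \<Rightarrow>\<^sub>L real) \<Rightarrow> real" where
  "pairing x xs = blinfun_apply xs x"

definition monotone_op :: "('a::real_normed_vector) dualpair set \<Rightarrow> bool" where
  "monotone_op T \<longleftrightarrow>
     (\<forall>x xs y ys. (x, xs) \<in> T \<longrightarrow> (y, ys) \<in> T \<longrightarrow> pairing (x - y) (xs - ys) \<ge> 0)"

definition maximal_monotone :: "('a::real_normed_vector) dualpair set \<Rightarrow> bool" where
  "maximal_monotone T \<longleftrightarrow> monotone_op T \<and> (\<forall>S. monotone_op S \<and> T \<subseteq> S \<longrightarrow> S = T)"

definition range_op :: "('a::real_normed_vector) dualpair set \<Rightarrow> ('a \<Rightarrow>\<^sub>L real) set" where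
  "range_op T = snd ` T"

definition ereal_convex :: "('b::real_vector \<Rightarrow> ereal) \<Rightarrow> bool" where
  "ereal_convex h \<longleftrightarrow> convex {(z, r::real). h z \<le> ereal r}"

(* Lower semicontinuity (norm topology on X x X-dual): all sublevel sets closed.*)
definition ereal_lsc :: "('b::topological_space \<Rightarrow> ereal) \<Rightarrow> bool" where
  "ereal_lsc h \<longleftrightarrow> (\<forall>c. closed {z. h z \<le> c})"

definition fitz_family :: "('a::real_normed_vector) dualpair set \<Rightarrow> ('a dualpair \<Rightarrow> ereal) set" where
  "fitz_family T = {h. ereal_convex h \<and> ereal_lsc h \<and>
      (\<forall>x xs. h (x, xs) \<ge> ereal (pairing x xs)) \<and>
      (\<forall>x xs. (x, xs) \<in> T \<longrightarrow> h (x, xs) = ereal (pairing x xs))}"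

definition dom_e :: "('b \<Rightarrow> ereal) \<Rightarrow> 'b set" where
  "dom_e h = {z. h z < \<infinity>}"

end

theory Submission
  imports Defs
begin

(*
  Suppose R(T) lies in the closed ball of radius M. If \<xi> is in P2 D(h) for some h in F_T
  and ||\<xi>|| > M, pick y with <y, \<xi>> > M ||y||: the points (t y, \<xi>), t > 0, are not in T,
  and the points of T witnessing this push the Fitzpatrick minorant of h at (x, \<xi>) to
  infinity, although h(x, \<xi>) is finite. Moreover T has full domain (Debrunner-Flor for finitely many points of T plus
  compactness of the dual ball), so convexity of h between (z, \<xi>) and a point of T above
  z + (x - z)/t, followed by lower semicontinuity as t -> 0, gives
  h(x, \<xi>) <= h(z, \<xi>) + M ||x - z||.
  Conversely R(T) is contained in P2 D(h), and for (a, \<alpha>) in T the slice h(., \<alpha>) lies above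
  the affine function <., \<alpha>> with equality at a, so L-Lipschitz slices force ||\<alpha>|| <= L.
  The Fitzpatrick function of T belongs to F_T and witnesses the existential conditions.
*)

lemma pairing_simps [simp]:
  "pairing (x + y) xs = pairing x xs + pairing y xs"
  "pairing (x - y) xs = pairing x xs - pairing y xs"
  "pairing (- x) xs = - pairing x xs"
  "pairing (c *\<^sub>R x) xs = c * pairing x xs"
  "pairing x (xs + ys) = pairing x xs + pairing x ys"
  "pairing x (xs - ys) = pairing x xs - pairing x ys"
  "pairing x (- xs) = - pairing x xs"
  "pairing x (c *\<^sub>R xs) = c * pairing x xs"
  "pairing 0 xs = 0"
  "pairing x 0 = 0"
  "pairing x (sum f A) = (\<Sum>a\<in>A. pairing x (f a))"
  by (simp_all add: pairing_def blinfun.bilinear_simps blinfun.sum_left)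

lemma pairing_le_norm_mult:
  assumes "norm xs \<le> M"
  shows "pairing x xs \<le> M * norm x"
proof -
  have "pairing x xs \<le> norm xs * norm x"
    unfolding pairing_def using norm_blinfun[of xs x] by simp
  also have "\<dots> \<le> M * norm x"
    using assms by (simp add: mult_right_mono)
  finally show ?thesis .
qed

lemma norm_le_if_pairing_le:
  assumes "0 \<le> L" "\<And>v. pairing v xs \<le> L * norm v"
  shows "norm xs \<le> L"
proof (rule norm_blinfun_bound[OF assms(1)])
  fix v
  show "norm (blinfun_apply xs v) \<le> L * norm v"
    using assms(2)[of v] assms(2)[of "- v"] by (simp add: pairing_def blinfun.minus_right)
qed

lemma maximal_monotone_memI:
  assumes "maximal_monotone T" "\<And>a as. (a, as) \<in> T \<Longrightarrow> 0 \<le> pairing (x - a) (xs - as)"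
  shows "(x, xs) \<in> T"
proof -
  have flip: "pairing (u - v) (us - vs) = pairing (v - u) (vs - us)"
    for u v :: 'a and us vs :: "'a \<Rightarrow>\<^sub>L real"
    by (simp add: algebra_simps)
  have "monotone_op T"
    using assms(1) by (simp add: maximal_monotone_def)
  then have "monotone_op (insert (x, xs) T)"
    using assms(2) flip[of x _ xs] unfolding monotone_op_def by (auto simp del: pairing_simps simp: pairing_simps(9))
  then show ?thesis
    using assms(1) unfolding maximal_monotone_def by blast
qed

lemma maximal_monotone_not_memE:
  assumes "maximal_monotone T" "(x, xs) \<notin> T"
  obtains a as where "(a, as) \<in> T" "pairing (x - a) (xs - as) < 0"
  using maximal_monotone_memI[OF assms(1)] assms(2) by (meson not_le)

lemma range_op_subset_cballD:
  assumes "range_op T \<subseteq> cball 0 M" "(a, as) \<in> T"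
  shows "norm as \<le> M"
  using assms by (force simp: range_op_def)

lemma le_if_le_add_vanishing:
  fixes a b k :: real
  assumes "\<And>t. 0 < t \<Longrightarrow> t \<le> 1 \<Longrightarrow> a \<le> b + t * k"
  shows "a \<le> b"
proof (rule tendsto_le[OF trivial_limit_at_right_real])
  show "((\<lambda>t. b + t * k) \<longlongrightarrow> b) (at_right 0)"
    by (auto intro!: tendsto_eq_intros)
  show "\<forall>\<^sub>F t in at_right 0. a \<le> b + t * k"
    using eventually_at_right_real[OF zero_less_one] by eventually_elim (simp add: assms)
qed (rule tendsto_const)

lemma exists_small_scale:
  fixes A B \<delta> e :: real
  assumes "0 < \<delta>" "0 < e"
  shows "\<exists>t. 0 < t \<and> t \<le> 1 \<and> t * A < \<delta> \<and> t * B < e"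
proof -
  have lim: "((\<lambda>t. t * C) \<longlongrightarrow> 0) (at_right 0)" for C :: real
    by (auto intro!: tendsto_eq_intros)
  have "\<forall>\<^sub>F t in at_right 0. t \<in> {0<..<1} \<and> t * A < \<delta> \<and> t * B < e"
    using eventually_at_right_real[OF zero_less_one] order_tendstoD(2)[OF lim[of A] assms(1)]
      order_tendstoD(2)[OF lim[of B] assms(2)]
    by eventually_elim blast
  then show ?thesis
    using eventually_happens'[OF trivial_limit_at_right_real] by fastforce
qed

lemma ereal_convexD:
  assumes "ereal_convex h" "h p \<le> ereal r" "h q \<le> ereal s" "0 \<le> t" "t \<le> 1"
  shows "h ((1 - t) *\<^sub>R p + t *\<^sub>R q) \<le> ereal ((1 - t) * r + t * s)"
proof -
  have "(1 - t) *\<^sub>R (p, r) + t *\<^sub>R (q, s) \<in> {(z, r::real). h z \<le> ereal r}"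
    using assms unfolding ereal_convex_def by (intro convexD_alt) auto
  then show ?thesis by simp
qed

lemma ereal_convex_SUP:
  assumes "\<And>i. i \<in> I \<Longrightarrow> ereal_convex (f i)"
  shows "ereal_convex (\<lambda>z. SUP i\<in>I. f i z)"
proof -
  have "{(z, r). (SUP i\<in>I. f i z) \<le> ereal r} = (\<Inter>i\<in>I. {(z, r). f i z \<le> ereal r})"
    by (auto simp: SUP_le_iff)
  then show ?thesis
    using assms unfolding ereal_convex_def by (auto intro: convex_INT)
qed

lemma ereal_lsc_SUP:
  assumes "\<And>i. i \<in> I \<Longrightarrow> ereal_lsc (f i)"
  shows "ereal_lsc (\<lambda>z. SUP i\<in>I. f i z)"
  unfolding ereal_lsc_def
proof
  fix c
  have "{z. (SUP i\<in>I. f i z) \<le> c} = (\<Inter>i\<in>I. {z. f i z \<le> c})"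
    by (auto simp: SUP_le_iff)
  then show "closed {z. (SUP i\<in>I. f i z) \<le> c}"
    using assms unfolding ereal_lsc_def by auto
qed

lemma ereal_convex_ereal:
  assumes "convex_on UNIV g"
  shows "ereal_convex (\<lambda>z. ereal (g z))"
  using convex_epigraphI[OF assms] unfolding ereal_convex_def epigraph_def
  by (simp add: case_prod_beta')

lemma ereal_lsc_ereal:
  assumes "continuous_on UNIV g"
  shows "ereal_lsc (\<lambda>z. ereal (g z))"
  unfolding ereal_lsc_def
  by (intro allI closed_Collect_le continuous_on_ereal assms continuous_on_const)

lemma ereal_lsc_le_if_approximable:
  assumes "ereal_lsc h" "\<And>e \<delta>. 0 < e \<Longrightarrow> 0 < \<delta> \<Longrightarrow> \<exists>y. dist y z < \<delta> \<and> h y \<le> ereal (c + e)"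
  shows "h z \<le> ereal c"
proof (rule ereal_le_epsilon2)
  fix e :: real assume "0 < e"
  have "closed {y. h y \<le> ereal (c + e)}"
    using assms(1) unfolding ereal_lsc_def by blast
  then have "z \<in> {y. h y \<le> ereal (c + e)}"
    using assms(2)[OF \<open>0 < e\<close>] by (subst closed_approachable[symmetric]) auto
  then show "h z \<le> ereal c + ereal e" by simp
qed

subsection \<open>The Fitzpatrick function\<close>

definition fitz_term :: "'a::real_normed_vector dualpair \<Rightarrow> 'a dualpair \<Rightarrow> real" where
  "fitz_term p z = pairing (fst z) (snd p) + pairing (fst p) (snd z) - pairing (fst p) (snd p)"

definition fitzpatrick :: "'a::real_normed_vector dualpair set \<Rightarrow> 'a dualpair \<Rightarrow> ereal" where
  "fitzpatrick T z = (SUP p\<in>T. ereal (fitz_term p z))"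

lemma pairing_minus_fitz_term:
  "pairing (fst z) (snd z) - fitz_term p z = pairing (fst z - fst p) (snd z - snd p)"
  by (simp add: fitz_term_def algebra_simps)

lemma convex_on_fitz_term: "convex_on UNIV (fitz_term p)"
proof
  fix t :: real and z w :: "'a::real_normed_vector dualpair"
  show "fitz_term p ((1 - t) *\<^sub>R z + t *\<^sub>R w) \<le> (1 - t) * fitz_term p z + t * fitz_term p w"
    by (simp add: fitz_term_def algebra_simps)
qed simp

lemma continuous_on_fitz_term: "continuous_on UNIV (fitz_term p)"
  unfolding fitz_term_def pairing_def by (intro continuous_intros)

lemma fitzpatrick_in_fitz_family:
  assumes "maximal_monotone T"
  shows "fitzpatrick T \<in> fitz_family T"
proof -
  have ge: "ereal (pairing x xs) \<le> fitzpatrick T (x, xs)" for x xs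
  proof (cases "(x, xs) \<in> T")
    case True
    then have "ereal (fitz_term (x, xs) (x, xs)) \<le> fitzpatrick T (x, xs)"
      unfolding fitzpatrick_def by (rule SUP_upper)
    then show ?thesis by (simp add: fitz_term_def)
  next
    case False
    then obtain a as where "(a, as) \<in> T" "pairing (x - a) (xs - as) < 0"
      using maximal_monotone_not_memE[OF assms] by blast
    moreover have "ereal (fitz_term (a, as) (x, xs)) \<le> fitzpatrick T (x, xs)"
      unfolding fitzpatrick_def using calculation(1) by (rule SUP_upper)
    moreover have "pairing x xs \<le> fitz_term (a, as) (x, xs)"
      using calculation(2) pairing_minus_fitz_term[of "(x, xs)" "(a, as)"]
      by (simp del: pairing_simps)
    ultimately show ?thesis
      by (meson ereal_less_eq(3) order_trans)
  qed
  have "fitzpatrick T (x, xs) \<le> ereal (pairing x xs)" if "(x, xs) \<in> T" for x xs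
    unfolding fitzpatrick_def
  proof (rule SUP_least)
    fix p assume "p \<in> T"
    with that assms have "0 \<le> pairing (x - fst p) (xs - snd p)"
      unfolding maximal_monotone_def monotone_op_def by (metis prod.collapse)
    then show "ereal (fitz_term p (x, xs)) \<le> ereal (pairing x xs)"
      using pairing_minus_fitz_term[of "(x, xs)" p] by simp
  qed
  with ge have "fitzpatrick T (x, xs) = ereal (pairing x xs)" if "(x, xs) \<in> T" for x xs
    using that by (simp add: antisym)
  moreover have "ereal_convex (fitzpatrick T)" "ereal_lsc (fitzpatrick T)"
    unfolding fitzpatrick_def
    by (simp_all add: ereal_convex_SUP ereal_convex_ereal convex_on_fitz_term
        ereal_lsc_SUP ereal_lsc_ereal continuous_on_fitz_term)
  ultimately show ?thesis
    using ge unfolding fitz_family_def by blast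
qed

lemma fitz_family_ge_pairing:
  assumes "h \<in> fitz_family T"
  shows "ereal (pairing x xs) \<le> h (x, xs)"
  using assms by (simp add: fitz_family_def)

lemma range_op_subset_fitz_family_dom:
  assumes "h \<in> fitz_family T"
  shows "range_op T \<subseteq> snd ` dom_e h"
proof
  fix as assume "as \<in> range_op T"
  then obtain a where "(a, as) \<in> T"
    by (auto simp: range_op_def)
  with assms have "(a, as) \<in> dom_e h"
    by (simp add: fitz_family_def dom_e_def)
  then show "as \<in> snd ` dom_e h"
    by force
qed

text \<open>On the segment from \<open>p\<close> to \<open>z\<close>, \<open>h\<close> lies above the quadratic given by the pairing
  and below the chord; the two agree at \<open>p\<close>, so comparing slopes there gives the bound.\<close>

lemma fitz_family_ge_fitz_term:
  assumes h: "h \<in> fitz_family T" and "p \<in> T" "h z \<le> ereal c"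
  shows "fitz_term p z \<le> c"
proof (rule le_if_le_add_vanishing[where k = "fitz_term p z - pairing (fst z) (snd z)"])
  fix t :: real assume t: "0 < t" "t \<le> 1"
  obtain a as x xs where p: "p = (a, as)" and z: "z = (x, xs)" by fastforce
  have "h p \<le> ereal (pairing a as)"
    using h \<open>p \<in> T\<close> by (simp add: fitz_family_def p)
  have "ereal (pairing ((1 - t) *\<^sub>R a + t *\<^sub>R x) ((1 - t) *\<^sub>R as + t *\<^sub>R xs))
      \<le> h ((1 - t) *\<^sub>R p + t *\<^sub>R z)"
    using h by (simp add: fitz_family_def p z del: pairing_simps)
  also have "\<dots> \<le> ereal ((1 - t) * pairing a as + t * c)"
    using h t \<open>h p \<le> ereal (pairing a as)\<close> \<open>h z \<le> ereal c\<close>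
    by (intro ereal_convexD) (auto simp: fitz_family_def)
  finally have "pairing ((1 - t) *\<^sub>R a + t *\<^sub>R x) ((1 - t) *\<^sub>R as + t *\<^sub>R xs)
      \<le> (1 - t) * pairing a as + t * c"
    by simp
  moreover have "pairing ((1 - t) *\<^sub>R a + t *\<^sub>R x) ((1 - t) *\<^sub>R as + t *\<^sub>R xs)
      = (1 - t) * pairing a as + t * ((1 - t) * fitz_term p z + t * pairing x xs)"
    by (simp add: p z fitz_term_def algebra_simps)
  ultimately have "t * ((1 - t) * fitz_term p z + t * pairing x xs) \<le> t * c"
    by linarith
  then have "(1 - t) * fitz_term p z + t * pairing x xs \<le> c"
    using t(1) by (rule mult_left_le_imp_le)
  then show "fitz_term p z \<le> c + t * (fitz_term p z - pairing (fst z) (snd z))"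
    using t by (simp add: z algebra_simps)
qed

lemma fitz_family_dom_norm_le:
  assumes maxm: "maximal_monotone T" and bound: "range_op T \<subseteq> cball 0 M"
    and "0 \<le> M" and h: "h \<in> fitz_family T" and "h (x, xs) < \<infinity>"
  shows "norm xs \<le> M"
proof (rule ccontr)
  assume big: "\<not> norm xs \<le> M"
  then obtain y where y: "M * norm y < pairing y xs"
    using norm_le_if_pairing_le[OF \<open>0 \<le> M\<close>] by (meson not_le)
  have "ereal (pairing x xs) \<le> h (x, xs)"
    using h by (rule fitz_family_ge_pairing)
  with \<open>h (x, xs) < \<infinity>\<close> obtain c where c: "h (x, xs) = ereal c"
    by (cases "h (x, xs)") auto
  have escape: "t * (pairing y xs - M * norm y) < c + M * norm x" if "0 < t" for t
  proof -
    have "(t *\<^sub>R y, xs) \<notin> T"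
      using range_op_subset_cballD[OF bound] big by blast
    then obtain a as where aT: "(a, as) \<in> T" and "pairing (t *\<^sub>R y - a) (xs - as) < 0"
      using maximal_monotone_not_memE[OF maxm] by blast
    then have "t * pairing y xs - t * pairing y as - pairing a xs + pairing a as < 0"
      by (simp add: algebra_simps)
    moreover have "pairing x as + pairing a xs - pairing a as \<le> c"
      using fitz_family_ge_fitz_term[OF h aT, of "(x, xs)" c] c by (simp add: fitz_term_def)
    moreover have "t * pairing y as \<le> t * (M * norm y)"
      using pairing_le_norm_mult[OF range_op_subset_cballD[OF bound aT]] \<open>0 < t\<close> by simp
    moreover have "pairing (- x) as \<le> M * norm (- x)"
      using pairing_le_norm_mult[OF range_op_subset_cballD[OF bound aT]] .
    ultimately show ?thesis
      by (simp add: right_diff_distrib)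
  qed
  define \<kappa> where "\<kappa> = pairing y xs - M * norm y"
  have "0 < \<kappa>"
    using y by (simp add: \<kappa>_def)
  moreover have "0 \<le> (\<bar>c\<bar> + M * norm x) / \<kappa>"
    using \<open>0 < \<kappa>\<close> \<open>0 \<le> M\<close> by simp
  ultimately have "((\<bar>c\<bar> + M * norm x) / \<kappa> + 1) * \<kappa> < c + M * norm x"
    using escape[of "(\<bar>c\<bar> + M * norm x) / \<kappa> + 1"] by (simp add: \<kappa>_def)
  moreover have "((\<bar>c\<bar> + M * norm x) / \<kappa> + 1) * \<kappa> = \<bar>c\<bar> + M * norm x + \<kappa>"
    using \<open>0 < \<kappa>\<close> by (simp add: field_simps)
  ultimately show False
    using \<open>0 < \<kappa>\<close> by linarith
qed

subsection \<open>A finite minimax lemma\<close>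

definition prob_simplex :: "'p set \<Rightarrow> ('p \<Rightarrow> real) set" where
  "prob_simplex F = {l. (\<forall>q. q \<notin> F \<longrightarrow> l q = 0) \<and> (\<forall>q\<in>F. 0 \<le> l q) \<and> sum l F = 1}"

lemma compact_prob_simplex:
  fixes F :: "'p set"
  assumes "finite F"
  shows "compact (prob_simplex F)"
proof -
  let ?K = "PiE UNIV (\<lambda>q. if q \<in> F then {0..1::real} else {0})"
  have "compactin (product_topology (\<lambda>_. euclidean) UNIV) ?K"
    by (subst compactin_PiE) auto
  then have "compact ?K"
    by (simp add: euclidean_product_topology)
  moreover have "closed (prob_simplex F)"
  proof -
    have "prob_simplex F = (\<Inter>q\<in>-F. {l. l q = 0}) \<inter> (\<Inter>q\<in>F. {l. 0 \<le> l q}) \<inter> {l. sum l F = 1}"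
      by (auto simp: prob_simplex_def)
    moreover have "closed {l::'p \<Rightarrow> real. l q = 0}" "closed {l::'p \<Rightarrow> real. 0 \<le> l q}" for q
      by (auto intro!: closed_Collect_eq closed_Collect_le continuous_on_product_coordinates)
    moreover have "closed {l::'p \<Rightarrow> real. sum l F = 1}"
      by (auto intro!: closed_Collect_eq continuous_intros continuous_on_product_coordinates)
    ultimately show ?thesis
      by (simp only:) (intro closed_Int closed_INT; blast)
  qed
  moreover have "prob_simplex F \<subseteq> ?K"
    using member_le_sum[of _ F] assms by (fastforce simp: prob_simplex_def PiE_iff)
  ultimately show ?thesis
    by (metis compact_Int_closed inf.absorb_iff2)
qed

definition payoff_deficit :: "'p set \<Rightarrow> ('p \<Rightarrow> 'p \<Rightarrow> real) \<Rightarrow> ('p \<Rightarrow> real) \<Rightarrow> real" where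
  "payoff_deficit F c l = (\<Sum>p\<in>F. (min 0 (\<Sum>q\<in>F. l q * c p q))\<^sup>2)"

lemma square_min_zero_add_le:
  fixes a s :: real
  shows "(min 0 (a + s))\<^sup>2 \<le> (min 0 a)\<^sup>2 + 2 * s * min 0 a + s\<^sup>2"
proof (cases "0 \<le> a")
  case True
  show ?thesis
  proof (cases "0 \<le> a + s")
    case False
    have "a * (a + 2 * s) \<le> 0"
      using True False by (intro mult_nonneg_nonpos) auto
    then show ?thesis
      using True False by (simp add: power2_eq_square min_def algebra_simps)
  qed (use True in \<open>auto simp: min_def\<close>)
next
  case False
  have "0 \<le> (a + s) * (a + s)"
    by simp
  with False show ?thesis
    by (cases "0 \<le> a + s") (auto simp: power2_eq_square min_def algebra_simps)
qed

text \<open>Obtained by moving from the minimizer towards the vertex \<open>j\<close> of the simplex.\<close>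

lemma payoff_deficit_minimizer_first_order:
  assumes fin: "finite F" and "j \<in> F" and l0: "l0 \<in> prob_simplex F"
    and min: "\<And>l. l \<in> prob_simplex F \<Longrightarrow> payoff_deficit F c l0 \<le> payoff_deficit F c l"
  shows "(\<Sum>p\<in>F. - min 0 (\<Sum>q\<in>F. l0 q * c p q) * c p j) \<le> - payoff_deficit F c l0"
proof -
  define A where "A p = (\<Sum>q\<in>F. l0 q * c p q)" for p
  define b where "b p = c p j - A p" for p
  define S where "S = (\<Sum>p\<in>F. min 0 (A p) * b p)"
  define B where "B = (\<Sum>p\<in>F. (b p)\<^sup>2)"
  have d0: "payoff_deficit F c l0 = (\<Sum>p\<in>F. (min 0 (A p))\<^sup>2)"
    by (simp add: payoff_deficit_def A_def)
  have "0 \<le> S"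
  proof (rule le_if_le_add_vanishing[where k = "B / 2"])
    fix t :: real assume t: "0 < t" "t \<le> 1"
    define lt where "lt q = (1 - t) * l0 q + (if q = j then t else 0)" for q
    have "lt \<in> prob_simplex F"
      using l0 t \<open>j \<in> F\<close> fin
      by (auto simp: prob_simplex_def lt_def sum.distrib simp flip: sum_distrib_left)
    have "(\<Sum>q\<in>F. lt q * c p q) = A p + t * b p" for p
    proof -
      have "(\<Sum>q\<in>F. lt q * c p q) = (\<Sum>q\<in>F. (1 - t) * (l0 q * c p q) + (if q = j then t * c p q else 0))"
        by (rule sum.cong) (simp_all add: lt_def algebra_simps)
      also have "\<dots> = (1 - t) * A p + t * c p j"
        using \<open>j \<in> F\<close> fin by (simp add: A_def sum.distrib sum_distrib_left)
      finally show ?thesis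
        by (simp add: b_def algebra_simps)
    qed
    then have "payoff_deficit F c lt \<le> (\<Sum>p\<in>F. (min 0 (A p))\<^sup>2 + 2 * (t * b p) * min 0 (A p) + (t * b p)\<^sup>2)"
      unfolding payoff_deficit_def by (simp add: sum_mono square_min_zero_add_le)
    also have "\<dots> = payoff_deficit F c l0 + 2 * t * S + t\<^sup>2 * B"
      by (simp add: d0 S_def B_def sum.distrib sum_distrib_left power_mult_distrib algebra_simps)
    finally have "0 \<le> 2 * t * (S + t * (B / 2))"
      using min[OF \<open>lt \<in> prob_simplex F\<close>] by (simp add: power2_eq_square algebra_simps)
    then show "0 \<le> S + t * (B / 2)"
      using t by (simp add: zero_le_mult_iff)
  qed
  moreover have "min 0 (A p) * A p = (min 0 (A p))\<^sup>2" for p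
    by (simp add: min_def power2_eq_square)
  then have "S = (\<Sum>p\<in>F. min 0 (A p) * c p j) - payoff_deficit F c l0"
    by (simp add: S_def b_def d0 right_diff_distrib sum_subtractf)
  ultimately show ?thesis
    by (simp add: A_def sum_negf)
qed

lemma skew_quadratic_form_nonneg:
  fixes c :: "'p \<Rightarrow> 'p \<Rightarrow> real" and \<mu> :: "'p \<Rightarrow> real"
  assumes "\<And>p q. p \<in> F \<Longrightarrow> q \<in> F \<Longrightarrow> 0 \<le> c p q + c q p" and "\<And>p. 0 \<le> \<mu> p"
  shows "0 \<le> (\<Sum>j\<in>F. \<mu> j * (\<Sum>p\<in>F. \<mu> p * c p j))"
proof -
  define Q where "Q = (\<Sum>j\<in>F. \<Sum>p\<in>F. \<mu> j * \<mu> p * c p j)"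
  have "Q = (\<Sum>j\<in>F. \<Sum>p\<in>F. \<mu> p * \<mu> j * c j p)"
    unfolding Q_def by (rule sum.swap)
  also have "\<dots> = (\<Sum>j\<in>F. \<Sum>p\<in>F. \<mu> j * \<mu> p * c j p)"
    by (simp add: mult.commute)
  finally have "Q = \<dots>" .
  then have "2 * Q = (\<Sum>j\<in>F. \<Sum>p\<in>F. \<mu> j * \<mu> p * (c p j + c j p))"
    by (simp add: Q_def distrib_left sum.distrib)
  also have "\<dots> \<ge> 0"
    using assms by (intro sum_nonneg) simp
  finally have "0 \<le> Q"
    by simp
  then show ?thesis
    by (simp add: Q_def sum_distrib_left mult.assoc)
qed

text \<open>The mixed strategy is a minimizer of the total squared shortfall of the payoffs.\<close>

lemma prob_simplex_nonneg_payoff: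
  assumes fin: "finite F" and "F \<noteq> {}" and skew: "\<And>p q. p \<in> F \<Longrightarrow> q \<in> F \<Longrightarrow> 0 \<le> c p q + c q p"
  shows "\<exists>l\<in>prob_simplex F. \<forall>p\<in>F. 0 \<le> (\<Sum>q\<in>F. l q * c p q)"
proof -
  obtain p0 where "p0 \<in> F"
    using \<open>F \<noteq> {}\<close> by blast
  then have "(\<lambda>q. if q = p0 then 1 else 0) \<in> prob_simplex F"
    using fin by (simp add: prob_simplex_def)
  moreover have "continuous_on UNIV (payoff_deficit F c)"
    unfolding payoff_deficit_def by (intro continuous_intros continuous_on_product_coordinates)
  then have "continuous_on (prob_simplex F) (payoff_deficit F c)"
    by (rule continuous_on_subset) simp
  ultimately obtain l0 where l0: "l0 \<in> prob_simplex F"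
    and min: "\<And>l. l \<in> prob_simplex F \<Longrightarrow> payoff_deficit F c l0 \<le> payoff_deficit F c l"
    using continuous_attains_inf[OF compact_prob_simplex[OF fin]] by blast
  define \<mu> where "\<mu> p = - min 0 (\<Sum>q\<in>F. l0 q * c p q)" for p
  define d0 where "d0 = payoff_deficit F c l0"
  have \<mu>_nonneg: "0 \<le> \<mu> p" for p
    by (simp add: \<mu>_def)
  have d0: "d0 = (\<Sum>p\<in>F. (\<mu> p)\<^sup>2)"
    by (simp add: d0_def payoff_deficit_def \<mu>_def)
  have "0 \<le> (\<Sum>j\<in>F. \<mu> j * (\<Sum>p\<in>F. \<mu> p * c p j))"
    using skew \<mu>_nonneg by (rule skew_quadratic_form_nonneg)
  also have "\<dots> \<le> (\<Sum>j\<in>F. \<mu> j * - d0)"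
    using payoff_deficit_minimizer_first_order[OF fin _ l0 min] \<mu>_nonneg
    by (intro sum_mono mult_left_mono) (simp_all add: \<mu>_def d0_def)
  finally have "d0 * (\<Sum>j\<in>F. \<mu> j) \<le> 0"
    by (simp add: sum_distrib_left sum_negf mult.commute)
  moreover have "0 \<le> d0" "0 \<le> (\<Sum>j\<in>F. \<mu> j)"
    using \<mu>_nonneg by (simp_all add: d0 sum_nonneg)
  ultimately have "d0 = 0 \<or> (\<Sum>j\<in>F. \<mu> j) = 0"
    by (auto simp: mult_le_0_iff)
  then have "\<forall>p\<in>F. \<mu> p = 0"
    using fin \<mu>_nonneg by (auto simp: d0 sum_nonneg_eq_0_iff)
  then have "\<forall>p\<in>F. 0 \<le> (\<Sum>q\<in>F. l0 q * c p q)"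
    by (auto simp: \<mu>_def min_def split: if_splits)
  then show ?thesis
    using l0 by blast
qed

subsection \<open>Maximal monotone operators with bounded range have full domain\<close>

definition dual_ball_functions :: "real \<Rightarrow> ('a::real_normed_vector \<Rightarrow> real) set" where
  "dual_ball_functions M = {f. linear f \<and> (\<forall>x. \<bar>f x\<bar> \<le> M * norm x)}"

text \<open>Banach--Alaoglu, in the topology of pointwise convergence on functions.\<close>

lemma compact_dual_ball_functions: "compact (dual_ball_functions M)"
proof -
  let ?K = "PiE UNIV (\<lambda>x::'a. {- (M * norm x)..M * norm x})"
  have "compactin (product_topology (\<lambda>_. euclidean) UNIV) ?K"
    by (subst compactin_PiE) auto
  then have "compact ?K"
    by (simp add: euclidean_product_topology)
  moreover have "closed {f::'a \<Rightarrow> real. linear f}"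
  proof -
    have "{f::'a \<Rightarrow> real. linear f} =
        (\<Inter>xy. {f. f (fst xy + snd xy) = f (fst xy) + f (snd xy)}) \<inter>
        (\<Inter>cx. {f. f (fst cx *\<^sub>R snd cx) = fst cx * f (snd cx)})"
      by (auto simp: linear_iff)
    then show ?thesis
      by (auto intro!: closed_Int closed_INT closed_Collect_eq continuous_intros
          continuous_on_product_coordinates)
  qed
  moreover have "dual_ball_functions M = ?K \<inter> {f. linear f}"
    by (auto simp: dual_ball_functions_def PiE_iff abs_le_iff minus_le_iff)
  ultimately show ?thesis
    by (simp add: compact_Int_closed)
qed

lemma blinfun_apply_in_dual_ball_functions:
  assumes "norm xs \<le> M"
  shows "blinfun_apply xs \<in> dual_ball_functions M"
proof -
  have "\<bar>blinfun_apply xs x\<bar> \<le> M * norm x" for x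
    using norm_blinfun[of xs x] assms by (simp add: order_trans mult_right_mono)
  then show ?thesis
    by (simp add: dual_ball_functions_def bounded_linear.linear[OF blinfun.bounded_linear_right])
qed

lemma dual_ball_functions_blinfun:
  assumes "f \<in> dual_ball_functions M"
  shows "blinfun_apply (Blinfun f) = f"
proof -
  have "bounded_linear f"
    using assms
    by (intro bounded_linear_intro[where K = M]) (auto simp: dual_ball_functions_def linear_iff mult.commute)
  then show ?thesis
    by (rule bounded_linear_Blinfun_apply)
qed

text \<open>The finite case of the Debrunner--Flor extension theorem.\<close>

lemma monotone_finite_extension:
  fixes T :: "'a::real_normed_vector dualpair set"
  assumes mono: "monotone_op T" and bound: "range_op T \<subseteq> cball 0 M"
    and "0 \<le> M" and "finite I" and "I \<subseteq> T"
  shows "\<exists>xs. norm xs \<le> M \<and> (\<forall>(a, as)\<in>I. 0 \<le> pairing (x - a) (xs - as))"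
proof (cases "I = {}")
  case True
  then show ?thesis
    using \<open>0 \<le> M\<close> by (intro exI[of _ 0]) simp
next
  case False
  define c where "c p q = pairing (x - fst p) (snd q - snd p)" for p q :: "'a dualpair"
  have "0 \<le> c p q + c q p" if "p \<in> I" "q \<in> I" for p q
  proof -
    have "c p q + c q p = pairing (fst q - fst p) (snd q - snd p)"
      by (simp add: c_def algebra_simps)
    then show ?thesis
      using mono that \<open>I \<subseteq> T\<close> unfolding monotone_op_def by (metis prod.collapse subsetD)
  qed
  then obtain l where l: "l \<in> prob_simplex I" and payoff: "\<forall>p\<in>I. 0 \<le> (\<Sum>q\<in>I. l q * c p q)"
    using prob_simplex_nonneg_payoff[OF \<open>finite I\<close> False] by blast
  define xs where "xs = (\<Sum>q\<in>I. l q *\<^sub>R snd q)"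
  have "norm xs \<le> (\<Sum>q\<in>I. l q * M)"
    unfolding xs_def using l \<open>I \<subseteq> T\<close> range_op_subset_cballD[OF bound]
    by (intro order_trans[OF norm_sum] sum_mono)
      (fastforce simp: prob_simplex_def intro: mult_left_mono)
  also have "\<dots> = M"
    using l by (simp add: prob_simplex_def flip: sum_distrib_right)
  finally have "norm xs \<le> M" .
  moreover have "(\<Sum>q\<in>I. l q * c p q) = pairing (x - fst p) (xs - snd p)" for p
  proof -
    have "(\<Sum>q\<in>I. l q * c p q) =
        (\<Sum>q\<in>I. l q * pairing (x - fst p) (snd q)) - (\<Sum>q\<in>I. l q) * pairing (x - fst p) (snd p)"
      by (simp add: c_def right_diff_distrib sum_subtractf sum_distrib_right)
    then show ?thesis
      using l by (simp add: xs_def prob_simplex_def)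
  qed
  ultimately show ?thesis
    using payoff by (intro exI[of _ xs]) (auto simp del: pairing_simps)
qed

text \<open>By compactness of the dual ball, the constraints of the previous lemma can be met
  simultaneously for all of \<open>T\<close>.\<close>

lemma maximal_monotone_bounded_range_full_domain:
  assumes maxm: "maximal_monotone T" and bound: "range_op T \<subseteq> cball 0 M"
    and "0 \<le> M"
  shows "\<exists>xs. (x, xs) \<in> T"
proof -
  have mono: "monotone_op T"
    using maxm by (simp add: maximal_monotone_def)
  define C where "C p = {f. pairing (x - fst p) (snd p) \<le> f (x - fst p)}" for p
  have closed: "closed (C p)" for p
    unfolding C_def
    by (intro closed_Collect_le continuous_intros continuous_on_product_coordinates)
  have fip: "dual_ball_functions M \<inter> (\<Inter>p\<in>I. C p) \<noteq> {}" if I: "finite I" "I \<subseteq> T" for I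
  proof -
    obtain xs where "norm xs \<le> M" and "\<forall>(a, as)\<in>I. 0 \<le> pairing (x - a) (xs - as)"
      using monotone_finite_extension[OF mono bound \<open>0 \<le> M\<close> I] by blast
    then have "blinfun_apply xs \<in> dual_ball_functions M \<inter> (\<Inter>p\<in>I. C p)"
      by (auto simp: C_def blinfun_apply_in_dual_ball_functions pairing_def blinfun.diff_left)
    then show ?thesis
      by blast
  qed
  have "dual_ball_functions M \<inter> (\<Inter>p\<in>T. C p) \<noteq> {}"
    by (rule compact_imp_fip_image[OF compact_dual_ball_functions closed fip])
  then obtain f where f: "f \<in> dual_ball_functions M" "\<And>p. p \<in> T \<Longrightarrow> f \<in> C p"
    by blast
  have "0 \<le> pairing (x - a) (Blinfun f - as)" if "(a, as) \<in> T" for a as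
    using f(2)[OF that] dual_ball_functions_blinfun[OF f(1)]
    by (simp add: C_def pairing_def blinfun.diff_left)
  then show ?thesis
    using maximal_monotone_memI[OF maxm] by blast
qed

subsection \<open>Slices of the functions in \<open>\<F>\<^sub>T\<close>\<close>

text \<open>Convexity between \<open>(z, x\<^sup>*)\<close> and a point of \<open>T\<close> above \<open>z + (x - z) / t\<close>, which
  exists because \<open>T\<close> has full domain.\<close>

lemma fitz_family_convex_step:
  assumes maxm: "maximal_monotone T" and bound: "range_op T \<subseteq> cball 0 M"
    and "0 \<le> M" and h: "h \<in> fitz_family T" and hz: "h (z, xs) \<le> ereal c"
    and t: "0 < t" "t \<le> 1"
  shows "\<exists>ys. norm (ys - xs) \<le> t * (M + norm xs) \<and>
    h (x, ys) \<le> ereal (c + t * (M * norm z - c) + M * norm (x - z))"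
proof -
  define a where "a = z + (1 / t) *\<^sub>R (x - z)"
  obtain as where aT: "(a, as) \<in> T"
    using maximal_monotone_bounded_range_full_domain[OF maxm bound \<open>0 \<le> M\<close>] by blast
  define ys where "ys = (1 - t) *\<^sub>R xs + t *\<^sub>R as"
  have combination: "(x, ys) = (1 - t) *\<^sub>R (z, xs) + t *\<^sub>R (a, as)"
    using t by (simp add: a_def ys_def algebra_simps)
  have "norm as \<le> M"
    using bound aT by (rule range_op_subset_cballD)
  have "t * pairing a as = t * pairing z as + pairing (x - z) as"
    using t by (simp add: a_def algebra_simps)
  moreover have "t * pairing z as \<le> t * (M * norm z)"
    using pairing_le_norm_mult[OF \<open>norm as \<le> M\<close>] t by simp
  moreover have "pairing (x - z) as \<le> M * norm (x - z)"
    using \<open>norm as \<le> M\<close> by (rule pairing_le_norm_mult)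
  ultimately have "t * pairing a as \<le> t * (M * norm z) + M * norm (x - z)"
    by linarith
  have "h (a, as) \<le> ereal (pairing a as)"
    using h aT by (simp add: fitz_family_def)
  then have "h ((1 - t) *\<^sub>R (z, xs) + t *\<^sub>R (a, as)) \<le> ereal ((1 - t) * c + t * pairing a as)"
    using h hz t by (intro ereal_convexD) (simp_all add: fitz_family_def)
  also have "\<dots> \<le> ereal (c + t * (M * norm z - c) + M * norm (x - z))"
    using \<open>t * pairing a as \<le> t * (M * norm z) + M * norm (x - z)\<close> by (simp add: algebra_simps)
  finally have "h (x, ys) \<le> ereal (c + t * (M * norm z - c) + M * norm (x - z))"
    unfolding combination .
  moreover have "norm (ys - xs) \<le> t * (M + norm xs)"
  proof -
    have "ys - xs = t *\<^sub>R (as - xs)"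
      by (simp add: ys_def algebra_simps)
    then have "norm (ys - xs) = t * norm (as - xs)"
      using t by simp
    also have "\<dots> \<le> t * (M + norm xs)"
      using t \<open>norm as \<le> M\<close> norm_triangle_ineq4[of as xs] by (simp add: mult_left_mono)
    finally show ?thesis .
  qed
  ultimately show ?thesis
    by blast
qed

lemma fitz_family_slice_le:
  assumes maxm: "maximal_monotone T" and bound: "range_op T \<subseteq> cball 0 M"
    and "0 \<le> M" and h: "h \<in> fitz_family T" and hz: "h (z, xs) \<le> ereal c"
  shows "h (x, xs) \<le> ereal (c + M * norm (x - z))"
proof (rule ereal_lsc_le_if_approximable)
  show "ereal_lsc h"
    using h by (simp add: fitz_family_def)
  fix e \<delta> :: real assume "0 < e" "0 < \<delta>"
  then obtain t where t: "0 < t" "t \<le> 1" "t * (M + norm xs) < \<delta>" "t * (M * norm z - c) < e"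
    using exists_small_scale by blast
  then obtain ys where "norm (ys - xs) \<le> t * (M + norm xs)"
    and "h (x, ys) \<le> ereal (c + t * (M * norm z - c) + M * norm (x - z))"
    using fitz_family_convex_step[OF maxm bound \<open>0 \<le> M\<close> h hz] by blast
  with t have "dist (x, ys) (x, xs) < \<delta> \<and> h (x, ys) \<le> ereal (c + M * norm (x - z) + e)"
    by (auto simp: dist_Pair_Pair dist_norm elim!: order_trans)
  then show "\<exists>y. dist y (x, xs) < \<delta> \<and> h y \<le> ereal (c + M * norm (x - z) + e)"
    by blast
qed

lemma fitz_family_slice_finite:
  assumes maxm: "maximal_monotone T" and bound: "range_op T \<subseteq> cball 0 M"
    and "0 \<le> M" and h: "h \<in> fitz_family T" and "xs \<in> snd ` dom_e h"
  shows "\<bar>h (x, xs)\<bar> \<noteq> \<infinity>"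
proof -
  obtain z where "h (z, xs) < \<infinity>"
    using \<open>xs \<in> snd ` dom_e h\<close> by (auto simp: dom_e_def)
  moreover have "ereal (pairing z xs) \<le> h (z, xs)"
    using h by (rule fitz_family_ge_pairing)
  ultimately obtain c where "h (z, xs) = ereal c"
    by (cases "h (z, xs)") auto
  then have "h (x, xs) \<le> ereal (c + M * norm (x - z))"
    using fitz_family_slice_le[OF maxm bound \<open>0 \<le> M\<close> h] by simp
  moreover have "ereal (pairing x xs) \<le> h (x, xs)"
    using h by (rule fitz_family_ge_pairing)
  ultimately show ?thesis
    by (cases "h (x, xs)") auto
qed

lemma fitz_family_slice_lipschitz:
  assumes maxm: "maximal_monotone T" and bound: "range_op T \<subseteq> cball 0 M"
    and "0 \<le> M" and h: "h \<in> fitz_family T" and xs: "xs \<in> snd ` dom_e h"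
  shows "\<bar>h (x, xs) - h (z, xs)\<bar> \<le> ereal (M * norm (x - z))"
proof -
  obtain r s where r: "h (x, xs) = ereal r" and s: "h (z, xs) = ereal s"
    using fitz_family_slice_finite[OF maxm bound \<open>0 \<le> M\<close> h xs] by (meson abs_neq_infinity_cases)
  have "r \<le> s + M * norm (x - z)"
    using fitz_family_slice_le[OF maxm bound \<open>0 \<le> M\<close> h, where z = z and xs = xs and c = s and x = x] r s
    by simp
  moreover have "s \<le> r + M * norm (x - z)"
    using fitz_family_slice_le[OF maxm bound \<open>0 \<le> M\<close> h, where z = x and xs = xs and c = r and x = z] r s
    by (simp add: norm_minus_commute)
  ultimately show ?thesis
    using r s by simp
qed

lemma range_op_subset_cball_if_lipschitz_slices:
  assumes h: "h \<in> fitz_family T"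
    and finite: "\<forall>xs\<in>snd ` dom_e h. \<forall>x. \<bar>h (x, xs)\<bar> \<noteq> \<infinity>"
    and "0 \<le> L" and lipschitz: "\<forall>xs\<in>snd ` dom_e h. \<forall>x z. \<bar>h (x, xs) - h (z, xs)\<bar> \<le> ereal (L * norm (x - z))"
  shows "range_op T \<subseteq> cball 0 L"
proof
  fix as assume "as \<in> range_op T"
  then obtain a where aT: "(a, as) \<in> T"
    by (auto simp: range_op_def)
  have dom: "as \<in> snd ` dom_e h"
    using range_op_subset_fitz_family_dom[OF h] \<open>as \<in> range_op T\<close> ..
  have "norm as \<le> L"
  proof (rule norm_le_if_pairing_le[OF \<open>0 \<le> L\<close>])
    fix v
    obtain r where r: "h (a + v, as) = ereal r"
      using finite dom by (meson abs_neq_infinity_cases)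
    have "h (a, as) = ereal (pairing a as)"
      using h aT by (simp add: fitz_family_def)
    moreover have "\<bar>h (a + v, as) - h (a, as)\<bar> \<le> ereal (L * norm (a + v - a))"
      using lipschitz dom by blast
    ultimately have "\<bar>r - pairing a as\<bar> \<le> L * norm v"
      using r by simp
    moreover have "pairing (a + v) as \<le> r"
      using fitz_family_ge_pairing[OF h, of "a + v" as] r by (simp del: pairing_simps)
    ultimately show "pairing v as \<le> L * norm v"
      by simp
  qed
  then show "as \<in> cball 0 L"
    by simp
qed

theorem lemma4p4:
  fixes T :: "('a::banach) dualpair set"
  assumes "maximal_monotone T"
  shows "(bounded (range_op T) \<longleftrightarrow>
            (\<forall>h\<in>fitz_family T. bounded (snd ` dom_e h)))
       \<and> (bounded (range_op T) \<longleftrightarrow>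
            (\<exists>h\<in>fitz_family T. bounded (snd ` dom_e h)))
       \<and> (bounded (range_op T) \<longleftrightarrow>
            ((\<forall>h\<in>fitz_family T. \<forall>xs\<in>snd ` dom_e h. \<forall>x. \<bar>h (x, xs)\<bar> \<noteq> \<infinity>) \<and>
             (\<exists>L::real. 0 \<le> L \<and> (\<forall>h\<in>fitz_family T. \<forall>xs\<in>snd ` dom_e h. \<forall>x z.
                 \<bar>h (x, xs) - h (z, xs)\<bar> \<le> ereal (L * norm (x - z))))))
       \<and> (bounded (range_op T) \<longleftrightarrow>
            (\<exists>h\<in>fitz_family T.
               (\<forall>xs\<in>snd ` dom_e h. \<forall>x. \<bar>h (x, xs)\<bar> \<noteq> \<infinity>) \<and>
               (\<exists>L::real. 0 \<le> L \<and> (\<forall>xs\<in>snd ` dom_e h. \<forall>x z.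
                 \<bar>h (x, xs) - h (z, xs)\<bar> \<le> ereal (L * norm (x - z))))))"
proof -
  have fitz: "fitzpatrick T \<in> fitz_family T"
    using assms by (rule fitzpatrick_in_fitz_family)
  have from_bounded: "(\<forall>h\<in>fitz_family T. bounded (snd ` dom_e h))
      \<and> (\<forall>h\<in>fitz_family T. \<forall>xs\<in>snd ` dom_e h. \<forall>x. \<bar>h (x, xs)\<bar> \<noteq> \<infinity>)
      \<and> (\<exists>L::real. 0 \<le> L \<and> (\<forall>h\<in>fitz_family T. \<forall>xs\<in>snd ` dom_e h. \<forall>x z.
            \<bar>h (x, xs) - h (z, xs)\<bar> \<le> ereal (L * norm (x - z))))"
    if bounded: "bounded (range_op T)"
  proof -
    obtain M where "0 < M" "range_op T \<subseteq> ball 0 M"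
      using bounded_subset_ballD[OF bounded] by blast
    then have M: "range_op T \<subseteq> cball 0 M" "0 \<le> M"
      by auto
    then have "bounded (snd ` dom_e h)" if "h \<in> fitz_family T" for h
      using fitz_family_dom_norm_le[OF assms M that] by (force simp: dom_e_def bounded_iff)
    with M show ?thesis
      by (intro conjI ballI allI exI[of _ M])
        (simp_all add: fitz_family_slice_finite[OF assms M] fitz_family_slice_lipschitz[OF assms M])
  qed
  have "bounded (range_op T)" if "h \<in> fitz_family T" "bounded (snd ` dom_e h)" for h
    using that(2) range_op_subset_fitz_family_dom[OF that(1)] by (rule bounded_subset)
  moreover have "bounded (range_op T)"
    if "h \<in> fitz_family T" "\<forall>xs\<in>snd ` dom_e h. \<forall>x. \<bar>h (x, xs)\<bar> \<noteq> \<infinity>" "0 \<le> L"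
      "\<forall>xs\<in>snd ` dom_e h. \<forall>x z. \<bar>h (x, xs) - h (z, xs)\<bar> \<le> ereal (L * norm (x - z))" for h L
    using bounded_cball range_op_subset_cball_if_lipschitz_slices[OF that] by (rule bounded_subset)
  ultimately show ?thesis
    by (intro conjI iffI; meson fitz from_bounded)
qed

end
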